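(* The absolute random order ratio of Best Fit satisfies $RR_{\mathrm{BF}} \ge 1.30$.
   Context: Bin packing: given a list $I=(x_1,\ldots,x_n)$ of items with sizes in $(0,1]$, a packing assigns items to unit-capacity bins so that the total size of items in each bin is at most $1$. $\mathrm{OPT}(I)$ denotes the minimum number of bins in a feasible packing. The online algorithm Best Fit (BF) processes the items in the given order and packs the current item into the fullest bin (largest current load) into which it fits, opening a new bin if it fits into no existing bin; items are never moved. $\mathrm{BF}(I)$ denotes the number of bins Best Fit uses on list $I$. For $\sigma\in\mathcal{S}_n$ (permutations of $[n]$), $I^\sigma=(x_{\sigma(1)},\ldots,x_{\sigma(n)})$. With $\mathcal{I}$ the set of all finite item lists and $\sigma$ uniformly random in $\mathcal{S}_n$, the absolute random order ratio is $$RR_{\mathrm{BF}}=\sup_{I\in\mathcal{I}}\frac{\mathbb{E}[\mathrm{BF}(I^\sigma)]}{\mathrm{OPT}(I)}.$$ *)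

theory Defs
  imports "HOL-Combinatorics.Permutations" "HOL-Library.Extended_Real"
begin

text \<open>Bin states are represented by the list of current bin loads (in opening order).\<close>

definition bf_step :: "real list \<Rightarrow> real \<Rightarrow> real list" where
  "bf_step loads x =
     (let fit = filter (\<lambda>i. loads ! i + x \<le> 1) [0..<length loads] in
      if fit = [] then loads @ [x]
      else (let m = Max ((\<lambda>i. loads ! i) ` set fit);
                j = hd (filter (\<lambda>i. loads ! i = m) fit)
            in loads[j := loads ! j + x]))"

definition bf_loads :: "real list \<Rightarrow> real list" where
  "bf_loads xs = foldl bf_step [] xs"

definition BF :: "real list \<Rightarrow> nat" where
  "BF xs = length (bf_loads xs)"

definition feasible_packing :: "real list \<Rightarrow> nat \<Rightarrow> (nat \<Rightarrow> nat) \<Rightarrow> bool" where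
  "feasible_packing xs k f \<longleftrightarrow>
     (\<forall>i<length xs. f i < k) \<and>
     (\<forall>b<k. (\<Sum>i\<in>{i. i < length xs \<and> f i = b}. xs ! i) \<le> 1)"

definition OPT :: "real list \<Rightarrow> nat" where
  "OPT xs = (LEAST k. \<exists>f. feasible_packing xs k f)"

definition permute_list_by :: "(nat \<Rightarrow> nat) \<Rightarrow> real list \<Rightarrow> real list" where
  "permute_list_by \<sigma> xs = map (\<lambda>i. xs ! \<sigma> i) [0..<length xs]"

definition expected_BF :: "real list \<Rightarrow> real" where
  "expected_BF xs =
     (\<Sum>\<sigma>\<in>{\<sigma>. \<sigma> permutes {..<length xs}}. real (BF (permute_list_by \<sigma> xs)))
       / fact (length xs)"

definition valid_instance :: "real list \<Rightarrow> bool" where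
  "valid_instance xs \<longleftrightarrow> xs \<noteq> [] \<and> (\<forall>x\<in>set xs. 0 < x \<and> x \<le> 1)"

definition RR_BF :: ereal where
  "RR_BF = (SUP xs\<in>{xs. valid_instance xs}. ereal (expected_BF xs / real (OPT xs)))"

end

theory Submission
  imports Defs
begin

text \<open>The items 1/6, 1/6, 1/4, 2/3, 3/4 have total size 2, so a two-bin packing must fill both
  bins exactly, and the only such split is {1/6, 1/6, 2/3}, {1/4, 3/4}. Best Fit reaches it only
  if the 1/4 joins the 3/4; running it on all 120 arrival orders, it opens a third bin in 72 of
  them. Hence its expected number of bins is 13/5 = 1.3 OPT, and any packing into k bins turns
  such an expectation into the lower bound E[BF]/k on the random order ratio.\<close>

lemma expected_BF_nonneg: "0 \<le> expected_BF xs"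
  unfolding expected_BF_def by (intro divide_nonneg_pos sum_nonneg) auto

lemma OPT_le_feasible_packing: "feasible_packing xs k f \<Longrightarrow> OPT xs \<le> k"
  unfolding OPT_def by (rule Least_le) blast

lemma feasible_packing_nonempty_pos: "feasible_packing xs k f \<Longrightarrow> xs \<noteq> [] \<Longrightarrow> 0 < k"
  unfolding feasible_packing_def by (cases xs) auto

lemma OPT_feasible: "feasible_packing xs k f \<Longrightarrow> \<exists>g. feasible_packing xs (OPT xs) g"
  unfolding OPT_def by (rule LeastI_ex) blast

lemma OPT_pos: "feasible_packing xs k f \<Longrightarrow> xs \<noteq> [] \<Longrightarrow> 0 < OPT xs"
  using OPT_feasible feasible_packing_nonempty_pos by blast

lemma expected_BF_div_bins_le_RR_BF:
  assumes "valid_instance xs" and "feasible_packing xs k f"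
  shows "ereal (expected_BF xs / real k) \<le> RR_BF"
proof -
  have "0 < OPT xs" "OPT xs \<le> k"
    using assms OPT_pos OPT_le_feasible_packing unfolding valid_instance_def by blast+
  then have "expected_BF xs / real k \<le> expected_BF xs / real (OPT xs)"
    by (intro divide_left_mono expected_BF_nonneg) auto
  also have "ereal (expected_BF xs / real (OPT xs)) \<le> RR_BF"
    unfolding RR_BF_def using \<open>valid_instance xs\<close> by (intro SUP_upper) auto
  finally show ?thesis by simp
qed

definition lower_bound_instance :: "real list" where
  "lower_bound_instance = [1/6, 1/6, 1/4, 2/3, 3/4]"

lemma valid_lower_bound_instance: "valid_instance lower_bound_instance"
  by (simp add: valid_instance_def lower_bound_instance_def)

lemma feasible_packing_lower_bound_instance:
  "feasible_packing lower_bound_instance 2 (\<lambda>i. if i \<in> {2, 4} then 1 else 0)"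
proof -
  let ?bin = "\<lambda>b :: nat.
    {i. i < length lower_bound_instance \<and> (if i \<in> {2, 4} then 1 else 0) = b}"
  have bins: "?bin 0 = {0, 1, 3}" "?bin 1 = {2, 4}"
    by (auto simp: lower_bound_instance_def)
  have "(\<Sum>i\<in>?bin b. lower_bound_instance ! i) \<le> 1" if "b < 2" for b
  proof -
    from that consider "b = 0" | "b = 1" by linarith
    then show ?thesis
      by cases (simp_all only: bins, simp_all add: lower_bound_instance_def)
  qed
  then show ?thesis
    unfolding feasible_packing_def by auto
qed

lemma expected_BF_lower_bound_instance: "expected_BF lower_bound_instance = 13 / 5"
proof -
  have indices: "{..<length lower_bound_instance} = {0, 1, 2, 3, 4}"
    by (auto simp: lower_bound_instance_def)
  have upt: "[0..<length lower_bound_instance] = [0, 1, 2, 3, 4]"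
    by (simp add: lower_bound_instance_def upt_rec)
  have sum_BF: "(\<Sum>\<sigma>\<in>{\<sigma>. \<sigma> permutes {..<length lower_bound_instance}}.
      real (BF (permute_list_by \<sigma> lower_bound_instance))) = 312"
    unfolding indices permute_list_by_def upt
    \<comment> \<open>Item sizes stay folded while the sum is expanded into the 120 arrival orders;
      only then is Best Fit run on each order.\<close>
    by (simp add: sum_over_permutations_insert transpose_def)
      (simp add: lower_bound_instance_def BF_def bf_loads_def bf_step_def)
  show ?thesis
    unfolding expected_BF_def sum_BF by (simp add: lower_bound_instance_def fact_numeral)
qed

theorem theorem5:
  shows "RR_BF \<ge> ereal (13 / 10)"
  using expected_BF_div_bins_le_RR_BF[OF valid_lower_bound_instance
      feasible_packing_lower_bound_instance]
  by (simp add: expected_BF_lower_bound_instance)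

end
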